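(* Let $x_a,x_b,l\in\mathbb{R}$ and $U=\{x\in C^1[a,b]: x(a)=x_a,\ x(b)=x_b\}$. Suppose $L$ and $g$ are convex on $[a,b]\times\mathbb{R}^2$, let $\lambda\ge 0$ and $K=L+\lambda g$. Then each $x\in U$ satisfying $\int_a^b g(t,x(t),{}^CD_{a+}^{\alpha,\rho}x(t))\,dt=l$ and $$\partial_2K(t,x(t),{}^CD_{a+}^{\alpha,\rho} x(t))-D_{b-}^{\alpha,\rho}\big(\partial_3K(t,x(t),{}^CD_{a+}^{\alpha,\rho} x(t))\big)=0\quad\text{on }[a,b]$$ minimizes $J(x)=\int_a^b L(t,x(t),{}^CD_{a+}^{\alpha,\rho}x(t))\,dt$ on $U$ subject to the constraint $\int_a^b g(t,x(t),{}^CD_{a+}^{\alpha,\rho}x(t))\,dt=l$.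
   Context: Fix $0<a<b<\infty$, $\alpha\in(0,1)$, $\rho>0$. For $x\in C^1[a,b]$, ${}^CD_{a+}^{\alpha,\rho} x(t)=\frac{\rho^\alpha}{\Gamma(1-\alpha)}\, t^{1-\rho}\frac{d}{dt}\int_a^t \frac{\tau^{\rho-1}}{(t^\rho-\tau^\rho)^\alpha}[x(\tau)-x(a)]\,d\tau=\frac{\rho^\alpha}{\Gamma(1-\alpha)}\int_a^t (t^\rho-\tau^\rho)^{-\alpha}x'(\tau)\,d\tau$. For a function $f$, $D_{b-}^{\alpha,\rho} f(t)=\frac{\rho^\alpha}{\Gamma(1-\alpha)}\frac{d}{dt}\int_t^b (\tau^\rho-t^\rho)^{-\alpha}f(\tau)\,d\tau$. $\partial_i$ denotes the partial derivative with respect to the $i$-th argument. Each of $L,g:[a,b]\times\mathbb{R}^2\to\mathbb{R}$ is continuously differentiable with respect to its second and third arguments, and for every $x\in C^1[a,b]$ the maps $t\mapsto D_{b-}^{\alpha,\rho}(\partial_3L(t,x(t),{}^CD_{a+}^{\alpha,\rho}x(t)))$ and $t\mapsto D_{b-}^{\alpha,\rho}(\partial_3g(t,x(t),{}^CD_{a+}^{\alpha,\rho}x(t)))$ are continuous. A function $F:[a,b]\times\mathbb{R}^2\to\mathbb{R}$ is convex on $S$ if $F(t,x+x_1,y+y_1)-F(t,x,y)\ge\partial_2F(t,x,y)x_1+\partial_3F(t,x,y)y_1$ for all $(t,x,y),(t,x+x_1,y+y_1)\in S$. *)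

theory Defs
  imports "HOL-Analysis.Analysis"
begin

definition C1_on :: "real \<Rightarrow> real \<Rightarrow> (real \<Rightarrow> real) \<Rightarrow> bool" where
  "C1_on a b x \<longleftrightarrow> (\<exists>x'. (\<forall>t\<in>{a..b}. (x has_real_derivative x' t) (at t within {a..b}))
                        \<and> continuous_on {a..b} x')"

definition pd2 :: "(real \<Rightarrow> real \<Rightarrow> real \<Rightarrow> real) \<Rightarrow> real \<Rightarrow> real \<Rightarrow> real \<Rightarrow> real" where
  "pd2 F t u v = deriv (\<lambda>w. F t w v) u"

definition pd3 :: "(real \<Rightarrow> real \<Rightarrow> real \<Rightarrow> real) \<Rightarrow> real \<Rightarrow> real \<Rightarrow> real \<Rightarrow> real" where
  "pd3 F t u v = deriv (\<lambda>w. F t u w) v"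

definition C1_23 :: "real \<Rightarrow> real \<Rightarrow> (real \<Rightarrow> real \<Rightarrow> real \<Rightarrow> real) \<Rightarrow> bool" where
  "C1_23 a b F \<longleftrightarrow>
     continuous_on ({a..b} \<times> UNIV) (\<lambda>(t, u, v). F t u v) \<and>
     (\<forall>t\<in>{a..b}. \<forall>u v. ((\<lambda>w. F t w v) has_real_derivative pd2 F t u v) (at u)
                      \<and> ((\<lambda>w. F t u w) has_real_derivative pd3 F t u v) (at v)) \<and>
     continuous_on ({a..b} \<times> UNIV) (\<lambda>(t, u, v). pd2 F t u v) \<and>
     continuous_on ({a..b} \<times> UNIV) (\<lambda>(t, u, v). pd3 F t u v)"

text \<open>Left Caputo-Katugampola derivative (second form of the definition).\<close>
definition caputo :: "real \<Rightarrow> real \<Rightarrow> real \<Rightarrow> (real \<Rightarrow> real) \<Rightarrow> real \<Rightarrow> real" where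
  "caputo a \<alpha> \<rho> x t = \<rho> powr \<alpha> / Gamma (1 - \<alpha>) *
     integral {a..t} (\<lambda>\<tau>. (t powr \<rho> - \<tau> powr \<rho>) powr (- \<alpha>) * deriv x \<tau>)"

definition rl_int :: "real \<Rightarrow> real \<Rightarrow> real \<Rightarrow> (real \<Rightarrow> real) \<Rightarrow> real \<Rightarrow> real" where
  "rl_int b \<alpha> \<rho> f s = integral {s..b} (\<lambda>\<tau>. (\<tau> powr \<rho> - s powr \<rho>) powr (- \<alpha>) * f \<tau>)"

definition rl_right :: "real \<Rightarrow> real \<Rightarrow> real \<Rightarrow> real \<Rightarrow> (real \<Rightarrow> real) \<Rightarrow> real \<Rightarrow> real" where
  "rl_right a b \<alpha> \<rho> f t = \<rho> powr \<alpha> / Gamma (1 - \<alpha>) *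
     vector_derivative (rl_int b \<alpha> \<rho> f) (at t within {a..b})"

definition rl_right_ok :: "real \<Rightarrow> real \<Rightarrow> real \<Rightarrow> real \<Rightarrow> (real \<Rightarrow> real) \<Rightarrow> bool" where
  "rl_right_ok a b \<alpha> \<rho> f \<longleftrightarrow>
     (\<forall>t\<in>{a..b}. rl_int b \<alpha> \<rho> f differentiable (at t within {a..b})) \<and>
     continuous_on {a..b} (rl_right a b \<alpha> \<rho> f)"

definition convex_S :: "real \<Rightarrow> real \<Rightarrow> (real \<Rightarrow> real \<Rightarrow> real \<Rightarrow> real) \<Rightarrow> bool" where
  "convex_S a b F \<longleftrightarrow> (\<forall>t\<in>{a..b}. \<forall>u v u1 v1.
     F t (u + u1) (v + v1) - F t u v \<ge> pd2 F t u v * u1 + pd3 F t u v * v1)"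

end

theory Submission
  imports Defs
begin

(*
  Put K = L + lam * g and, for an admissible competitor y, h = y - x, which vanishes at a and b.
  K is convex because lam >= 0, and the Caputo-Katugampola derivative is linear, so pointwise
    K(t, y, D y) - K(t, x, D x) >= d_2 K * h + d_3 K * D h.
  Integrating, the fractional integration by parts
    int_a^b f * D h = - int_a^b h * D_{b-} f
  (Dirichlet's formula for the weakly singular kernel (t^rho - tau^rho)^(-alpha), followed by
  classical integration by parts against h(a) = h(b) = 0) turns the right-hand side into
  int_a^b h * (d_2 K - D_{b-} d_3 K), which vanishes by the Euler-Lagrange equation.
  Hence int K(x) <= int K(y), and since both g-integrals equal l, J(x) <= J(y).
*)

definition left_frac_int :: "real \<Rightarrow> real \<Rightarrow> real \<Rightarrow> (real \<Rightarrow> real) \<Rightarrow> real \<Rightarrow> real" where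
  "left_frac_int a \<alpha> \<rho> f t = integral {a..t} (\<lambda>\<tau>. (t powr \<rho> - \<tau> powr \<rho>) powr (- \<alpha>) * f \<tau>)"

lemma powr_diff_lower_bound:
  fixes a b \<rho> :: real
  assumes "0 < a" "a \<le> b" "0 < \<rho>"
  obtains m where "0 < m" "\<And>\<tau> t. a \<le> \<tau> \<Longrightarrow> \<tau> \<le> t \<Longrightarrow> t \<le> b \<Longrightarrow> m * (t - \<tau>) \<le> t powr \<rho> - \<tau> powr \<rho>"
proof
  let ?m = "\<rho> * min (a powr (\<rho> - 1)) (b powr (\<rho> - 1))"
  show "0 < ?m" using assms by auto
  fix \<tau> t assume between: "a \<le> \<tau>" "\<tau> \<le> t" "t \<le> b"
  show "?m * (t - \<tau>) \<le> t powr \<rho> - \<tau> powr \<rho>"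
  proof (cases "\<tau> = t")
    case False
    then obtain z where z: "\<tau> < z" "z < t" "t powr \<rho> - \<tau> powr \<rho> = (t - \<tau>) * (\<rho> * z powr (\<rho> - 1))"
      using MVT2[of \<tau> t "\<lambda>s. s powr \<rho>" "\<lambda>s. \<rho> * s powr (\<rho> - 1)"] between assms
      by (force intro!: has_real_derivative_powr)
    have "min (a powr (\<rho> - 1)) (b powr (\<rho> - 1)) \<le> z powr (\<rho> - 1)"
    proof (cases "\<rho> - 1 \<ge> 0")
      case True
      then have "a powr (\<rho> - 1) \<le> z powr (\<rho> - 1)" using z between assms by (intro powr_mono2) auto
      then show ?thesis by linarith
    next
      case False
      then have "b powr (\<rho> - 1) \<le> z powr (\<rho> - 1)" using z between assms by (intro powr_mono2') auto
      then show ?thesis by linarith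
    qed
    then show ?thesis
      using z between assms by (simp add: mult.commute mult_left_mono)
  qed simp
qed

lemma kernel_le_dist_powr:
  fixes a b \<alpha> \<rho> :: real
  assumes "0 < a" "a \<le> b" "0 < \<rho>" "0 \<le> \<alpha>"
  obtains M where "0 \<le> M"
    "\<And>\<tau> t. a \<le> \<tau> \<Longrightarrow> \<tau> \<le> t \<Longrightarrow> t \<le> b \<Longrightarrow> (t powr \<rho> - \<tau> powr \<rho>) powr (- \<alpha>) \<le> M * \<bar>t - \<tau>\<bar> powr (- \<alpha>)"
proof -
  obtain m where m: "0 < m" "\<And>\<tau> t. a \<le> \<tau> \<Longrightarrow> \<tau> \<le> t \<Longrightarrow> t \<le> b \<Longrightarrow> m * (t - \<tau>) \<le> t powr \<rho> - \<tau> powr \<rho>"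
    using powr_diff_lower_bound assms by blast
  have "(t powr \<rho> - \<tau> powr \<rho>) powr (- \<alpha>) \<le> m powr (- \<alpha>) * \<bar>t - \<tau>\<bar> powr (- \<alpha>)"
    if "a \<le> \<tau>" "\<tau> \<le> t" "t \<le> b" for \<tau> t
  proof (cases "\<tau> = t")
    case False
    then have "(t powr \<rho> - \<tau> powr \<rho>) powr (- \<alpha>) \<le> (m * (t - \<tau>)) powr (- \<alpha>)"
      using m that assms by (intro powr_mono2') auto
    then show ?thesis using m that by (simp add: powr_mult)
  qed simp
  then show ?thesis using that[of "m powr (- \<alpha>)"] by simp
qed

lemma has_integral_dist_powr:
  fixes c d p \<alpha> :: real
  assumes "p \<in> {c..d}" "\<alpha> < 1"
  shows "((\<lambda>\<tau>. \<bar>\<tau> - p\<bar> powr (- \<alpha>)) has_integral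
           ((p - c) powr (1 - \<alpha>) + (d - p) powr (1 - \<alpha>)) / (1 - \<alpha>)) {c..d}"
proof -
  have "((\<lambda>\<tau>. \<bar>\<tau> - p\<bar> powr (- \<alpha>)) has_integral
      (\<lambda>\<tau>. - ((p - \<tau>) powr (1 - \<alpha>) / (1 - \<alpha>))) p - (\<lambda>\<tau>. - ((p - \<tau>) powr (1 - \<alpha>) / (1 - \<alpha>))) c) {c..p}"
  proof (rule fundamental_theorem_of_calculus_interior)
    show "continuous_on {c..p} (\<lambda>\<tau>. - ((p - \<tau>) powr (1 - \<alpha>) / (1 - \<alpha>)))"
      using assms by (intro continuous_intros continuous_on_powr') auto
    fix \<tau> assume "\<tau> \<in> {c<..<p}"
    then show "((\<lambda>\<tau>. - ((p - \<tau>) powr (1 - \<alpha>) / (1 - \<alpha>))) has_vector_derivative \<bar>\<tau> - p\<bar> powr (- \<alpha>)) (at \<tau>)"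
      using assms by (auto intro!: derivative_eq_intros simp: has_real_derivative_iff_has_vector_derivative[symmetric])
  qed (use assms in auto)
  moreover have "((\<lambda>\<tau>. \<bar>\<tau> - p\<bar> powr (- \<alpha>)) has_integral
      (\<lambda>\<tau>. (\<tau> - p) powr (1 - \<alpha>) / (1 - \<alpha>)) d - (\<lambda>\<tau>. (\<tau> - p) powr (1 - \<alpha>) / (1 - \<alpha>)) p) {p..d}"
  proof (rule fundamental_theorem_of_calculus_interior)
    show "continuous_on {p..d} (\<lambda>\<tau>. (\<tau> - p) powr (1 - \<alpha>) / (1 - \<alpha>))"
      using assms by (intro continuous_intros continuous_on_powr') auto
    fix \<tau> assume "\<tau> \<in> {p<..<d}"
    then show "((\<lambda>\<tau>. (\<tau> - p) powr (1 - \<alpha>) / (1 - \<alpha>)) has_vector_derivative \<bar>\<tau> - p\<bar> powr (- \<alpha>)) (at \<tau>)"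
      using assms by (auto intro!: derivative_eq_intros simp: has_real_derivative_iff_has_vector_derivative[symmetric])
  qed (use assms in auto)
  ultimately show ?thesis
    using has_integral_combine[of c p d] assms by (simp add: add_divide_distrib)
qed

lemma dist_powr_dominated_set_integrable:
  fixes f :: "real \<Rightarrow> real" and c d p \<alpha> C :: real
  assumes f: "f \<in> borel_measurable borel" and p: "p \<in> {c..d}" and "0 < \<alpha>" "\<alpha> < 1" "0 \<le> C"
    and dom: "\<And>\<tau>. \<tau> \<in> {c..d} \<Longrightarrow> \<bar>f \<tau>\<bar> \<le> C * \<bar>\<tau> - p\<bar> powr (- \<alpha>)"
  shows "set_integrable lborel {c..d} f"
    and "(LINT \<tau>:{c..d}|lborel. \<bar>f \<tau>\<bar>) \<le> 2 * C * (d - c) powr (1 - \<alpha>) / (1 - \<alpha>)"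
proof -
  let ?w = "\<lambda>\<tau>. C * \<bar>\<tau> - p\<bar> powr (- \<alpha>)"
  let ?I = "((p - c) powr (1 - \<alpha>) + (d - p) powr (1 - \<alpha>)) / (1 - \<alpha>)"
  have w: "(?w has_integral C * ?I) {c..d}"
    using has_integral_dist_powr[OF p \<open>\<alpha> < 1\<close>] by (rule has_integral_mult_right)
  then have "?w absolutely_integrable_on {c..d}"
    using \<open>0 \<le> C\<close> by (intro nonnegative_absolutely_integrable_1) (auto simp: integrable_on_def)
  then have wi: "set_integrable lborel {c..d} ?w"
    unfolding set_integrable_def by (subst (asm) integrable_completion) measurable
  show fi: "set_integrable lborel {c..d} f"
    by (rule set_integrable_bound[OF wi]) (use f dom \<open>0 \<le> C\<close> in \<open>auto intro!: AE_I2 simp: set_borel_measurable_def\<close>)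
  have "(LINT \<tau>:{c..d}|lborel. \<bar>f \<tau>\<bar>) \<le> (LINT \<tau>:{c..d}|lborel. ?w \<tau>)"
    by (rule set_integral_mono[OF set_integrable_abs[OF fi] wi dom])
  also have "\<dots> = C * ?I"
    unfolding set_borel_integral_eq_integral(2)[OF wi] by (rule integral_unique[OF w])
  also have "\<dots> \<le> C * (2 * (d - c) powr (1 - \<alpha>) / (1 - \<alpha>))"
  proof -
    have "(p - c) powr (1 - \<alpha>) \<le> (d - c) powr (1 - \<alpha>)" "(d - p) powr (1 - \<alpha>) \<le> (d - c) powr (1 - \<alpha>)"
      using p assms by (auto intro: powr_mono2)
    then show ?thesis
      using assms by (intro mult_left_mono divide_right_mono) auto
  qed
  finally show "(LINT \<tau>:{c..d}|lborel. \<bar>f \<tau>\<bar>) \<le> 2 * C * (d - c) powr (1 - \<alpha>) / (1 - \<alpha>)"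
    by (simp add: ac_simps)
qed

lemma left_kernel_set_integrable:
  fixes a b \<alpha> \<rho> B :: real and \<phi> :: "real \<Rightarrow> real"
  assumes "0 < a" "a \<le> b" "0 < \<alpha>" "\<alpha> < 1" "0 < \<rho>"
    and \<phi>: "\<phi> \<in> borel_measurable borel" "\<And>\<tau>. \<bar>\<phi> \<tau>\<bar> \<le> B"
  obtains C where
    "\<And>t. t \<in> {a..b} \<Longrightarrow> set_integrable lborel {a..t} (\<lambda>\<tau>. (t powr \<rho> - \<tau> powr \<rho>) powr (- \<alpha>) * \<phi> \<tau>)"
    "\<And>t. t \<in> {a..b} \<Longrightarrow> (LINT \<tau>:{a..t}|lborel. \<bar>(t powr \<rho> - \<tau> powr \<rho>) powr (- \<alpha>) * \<phi> \<tau>\<bar>) \<le> C"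
proof -
  obtain M where M: "0 \<le> M"
    "\<And>\<tau> t. a \<le> \<tau> \<Longrightarrow> \<tau> \<le> t \<Longrightarrow> t \<le> b \<Longrightarrow> (t powr \<rho> - \<tau> powr \<rho>) powr (- \<alpha>) \<le> M * \<bar>t - \<tau>\<bar> powr (- \<alpha>)"
    using kernel_le_dist_powr[OF assms(1,2,5) less_imp_le[OF assms(3)]] by blast
  have MB: "0 \<le> M * B" using M(1) \<phi>(2)[of 0] by simp
  show ?thesis
  proof (rule that[of "2 * (M * B) * (b - a) powr (1 - \<alpha>) / (1 - \<alpha>)"])
    fix t assume t: "t \<in> {a..b}"
    have meas: "(\<lambda>\<tau>. (t powr \<rho> - \<tau> powr \<rho>) powr (- \<alpha>) * \<phi> \<tau>) \<in> borel_measurable borel"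
      using \<phi>(1) by measurable
    have dom: "\<bar>(t powr \<rho> - \<tau> powr \<rho>) powr (- \<alpha>) * \<phi> \<tau>\<bar> \<le> M * B * \<bar>\<tau> - t\<bar> powr (- \<alpha>)"
      if "\<tau> \<in> {a..t}" for \<tau>
      using mult_mono[OF M(2)[of \<tau> t] \<phi>(2)[of \<tau>]] that t M(1)
      by (simp add: abs_mult abs_minus_commute mult_ac)
    have "t \<in> {a..t}" using t by simp
    note dominated = dist_powr_dominated_set_integrable[OF meas this assms(3,4) MB dom]
    show "set_integrable lborel {a..t} (\<lambda>\<tau>. (t powr \<rho> - \<tau> powr \<rho>) powr (- \<alpha>) * \<phi> \<tau>)"
      by (rule dominated(1))
    have "(t - a) powr (1 - \<alpha>) \<le> (b - a) powr (1 - \<alpha>)" using t assms by (intro powr_mono2) auto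
    then have "2 * (M * B) * (t - a) powr (1 - \<alpha>) / (1 - \<alpha>) \<le> 2 * (M * B) * (b - a) powr (1 - \<alpha>) / (1 - \<alpha>)"
      using assms MB by (intro divide_right_mono mult_left_mono) auto
    then show "(LINT \<tau>:{a..t}|lborel. \<bar>(t powr \<rho> - \<tau> powr \<rho>) powr (- \<alpha>) * \<phi> \<tau>\<bar>)
        \<le> 2 * (M * B) * (b - a) powr (1 - \<alpha>) / (1 - \<alpha>)"
      using dominated(2) by linarith
  qed
qed

lemma right_kernel_set_integrable:
  fixes a b \<alpha> \<rho> B :: real and \<psi> :: "real \<Rightarrow> real"
  assumes "0 < a" "a \<le> b" "0 < \<alpha>" "\<alpha> < 1" "0 < \<rho>"
    and \<psi>: "\<psi> \<in> borel_measurable borel" "\<And>t. \<bar>\<psi> t\<bar> \<le> B"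
  obtains C where
    "\<And>s. s \<in> {a..b} \<Longrightarrow> set_integrable lborel {s..b} (\<lambda>t. (t powr \<rho> - s powr \<rho>) powr (- \<alpha>) * \<psi> t)"
    "\<And>s. s \<in> {a..b} \<Longrightarrow> (LINT t:{s..b}|lborel. \<bar>(t powr \<rho> - s powr \<rho>) powr (- \<alpha>) * \<psi> t\<bar>) \<le> C"
proof -
  obtain M where M: "0 \<le> M"
    "\<And>\<tau> t. a \<le> \<tau> \<Longrightarrow> \<tau> \<le> t \<Longrightarrow> t \<le> b \<Longrightarrow> (t powr \<rho> - \<tau> powr \<rho>) powr (- \<alpha>) \<le> M * \<bar>t - \<tau>\<bar> powr (- \<alpha>)"
    using kernel_le_dist_powr[OF assms(1,2,5) less_imp_le[OF assms(3)]] by blast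
  have MB: "0 \<le> M * B" using M(1) \<psi>(2)[of 0] by simp
  show ?thesis
  proof (rule that[of "2 * (M * B) * (b - a) powr (1 - \<alpha>) / (1 - \<alpha>)"])
    fix s assume s: "s \<in> {a..b}"
    have meas: "(\<lambda>t. (t powr \<rho> - s powr \<rho>) powr (- \<alpha>) * \<psi> t) \<in> borel_measurable borel"
      using \<psi>(1) by measurable
    have dom: "\<bar>(t powr \<rho> - s powr \<rho>) powr (- \<alpha>) * \<psi> t\<bar> \<le> M * B * \<bar>t - s\<bar> powr (- \<alpha>)"
      if "t \<in> {s..b}" for t
      using mult_mono[OF M(2)[of s t] \<psi>(2)[of t]] that s M(1)
      by (simp add: abs_mult mult_ac)
    have "s \<in> {s..b}" using s by simp
    note dominated = dist_powr_dominated_set_integrable[OF meas this assms(3,4) MB dom]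
    show "set_integrable lborel {s..b} (\<lambda>t. (t powr \<rho> - s powr \<rho>) powr (- \<alpha>) * \<psi> t)"
      by (rule dominated(1))
    have "(b - s) powr (1 - \<alpha>) \<le> (b - a) powr (1 - \<alpha>)" using s assms by (intro powr_mono2) auto
    then have "2 * (M * B) * (b - s) powr (1 - \<alpha>) / (1 - \<alpha>) \<le> 2 * (M * B) * (b - a) powr (1 - \<alpha>) / (1 - \<alpha>)"
      using assms MB by (intro divide_right_mono mult_left_mono) auto
    then show "(LINT t:{s..b}|lborel. \<bar>(t powr \<rho> - s powr \<rho>) powr (- \<alpha>) * \<psi> t\<bar>)
        \<le> 2 * (M * B) * (b - a) powr (1 - \<alpha>) / (1 - \<alpha>)"
      using dominated(2) by linarith
  qed
qed

lemma left_frac_int_swap_borel: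
  fixes a b \<alpha> \<rho> B :: real and \<phi> \<psi> :: "real \<Rightarrow> real"
  assumes "0 < a" "a \<le> b" "0 < \<alpha>" "\<alpha> < 1" "0 < \<rho>"
    and \<phi>: "\<phi> \<in> borel_measurable borel" "\<And>\<tau>. \<bar>\<phi> \<tau>\<bar> \<le> B"
    and \<psi>: "\<psi> \<in> borel_measurable borel" "\<And>\<tau>. \<bar>\<psi> \<tau>\<bar> \<le> B"
  shows "integral {a..b} (\<lambda>t. \<psi> t * left_frac_int a \<alpha> \<rho> \<phi> t) = integral {a..b} (\<lambda>\<tau>. \<phi> \<tau> * rl_int b \<alpha> \<rho> \<psi> \<tau>)"
proof -
  let ?k = "\<lambda>t \<tau>. (t powr \<rho> - \<tau> powr \<rho>) powr (- \<alpha>)"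
  obtain C where left: "\<And>t. t \<in> {a..b} \<Longrightarrow> set_integrable lborel {a..t} (\<lambda>\<tau>. ?k t \<tau> * \<phi> \<tau>)"
      "\<And>t. t \<in> {a..b} \<Longrightarrow> (LINT \<tau>:{a..t}|lborel. \<bar>?k t \<tau> * \<phi> \<tau>\<bar>) \<le> C"
    using left_kernel_set_integrable[OF assms(1-5) \<phi>] by blast
  obtain C' where right: "\<And>\<tau>. \<tau> \<in> {a..b} \<Longrightarrow> set_integrable lborel {\<tau>..b} (\<lambda>t. ?k t \<tau> * \<psi> t)"
    using right_kernel_set_integrable[OF assms(1-5) \<psi>] by blast
  define F where "F t \<tau> = (if a \<le> \<tau> \<and> \<tau> \<le> t \<and> t \<le> b then \<psi> t * (?k t \<tau> * \<phi> \<tau>) else 0)" for t \<tau>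
  have F_left: "F t = (\<lambda>\<tau>. indicator {a..b} t * (\<psi> t * (indicator {a..t} \<tau> * (?k t \<tau> * \<phi> \<tau>))))" for t
    by (auto simp: fun_eq_iff F_def indicator_def)
  have F_right: "(\<lambda>t. F t \<tau>) = (\<lambda>t. indicator {a..b} \<tau> * (\<phi> \<tau> * (indicator {\<tau>..b} t * (?k t \<tau> * \<psi> t))))" for \<tau>
    by (auto simp: fun_eq_iff F_def indicator_def)
  have F_meas: "case_prod F \<in> borel_measurable (lborel \<Otimes>\<^sub>M lborel)"
    unfolding F_def using \<phi>(1) \<psi>(1) by measurable
  have inner: "(\<integral>\<tau>. F t \<tau> \<partial>lborel) = indicator {a..b} t * (\<psi> t * integral {a..t} (\<lambda>\<tau>. ?k t \<tau> * \<phi> \<tau>))" for t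
    using set_borel_integral_eq_integral(2)[OF left(1)[of t]]
    by (cases "t \<in> {a..b}") (simp_all add: F_left set_lebesgue_integral_def)
  have inner': "(\<integral>t. F t \<tau> \<partial>lborel) = indicator {a..b} \<tau> * (\<phi> \<tau> * integral {\<tau>..b} (\<lambda>t. ?k t \<tau> * \<psi> t))" for \<tau>
    using set_borel_integral_eq_integral(2)[OF right[of \<tau>]]
    by (cases "\<tau> \<in> {a..b}") (simp_all add: F_right set_lebesgue_integral_def)
  have F_integrable: "integrable (lborel \<Otimes>\<^sub>M lborel) (case_prod F)"
  proof (rule lborel_pair.Fubini_integrable[OF F_meas], unfold case_prod_conv)
    have norm_inner: "(\<integral>\<tau>. norm (F t \<tau>) \<partial>lborel)
        = indicator {a..b} t * (\<bar>\<psi> t\<bar> * (LINT \<tau>:{a..t}|lborel. \<bar>?k t \<tau> * \<phi> \<tau>\<bar>))" for t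
      by (simp add: F_left set_lebesgue_integral_def abs_mult)
    show "integrable lborel (\<lambda>t. \<integral>\<tau>. norm (F t \<tau>) \<partial>lborel)"
    proof (rule Bochner_Integration.integrable_bound)
      show "integrable lborel (\<lambda>t. indicator {a..b} t *\<^sub>R (B * C))"
        using borel_integrable_atLeastAtMost'[of a b "\<lambda>_. B * C"] by (simp add: set_integrable_def)
      show "(\<lambda>t. \<integral>\<tau>. norm (F t \<tau>) \<partial>lborel) \<in> borel_measurable lborel"
        using F_meas by measurable
      show "AE t in lborel. norm (\<integral>\<tau>. norm (F t \<tau>) \<partial>lborel) \<le> norm (indicator {a..b} t *\<^sub>R (B * C))"
      proof (rule AE_I2)
        fix t show "norm (\<integral>\<tau>. norm (F t \<tau>) \<partial>lborel) \<le> norm (indicator {a..b} t *\<^sub>R (B * C))"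
          unfolding norm_inner
          using mult_mono[OF \<psi>(2)[of t] left(2)[of t]] \<psi>(2)[of t] abs_ge_self[of "B * C"] order_trans[OF abs_ge_zero \<psi>(2)]
          by (auto simp: indicator_def set_lebesgue_integral_def simp del: abs_mult)
      qed
    qed
    show "AE t in lborel. integrable lborel (F t)"
      using left(1) by (intro AE_I2) (auto simp: F_left set_integrable_def indicator_def)
  qed
  have "set_integrable lborel {a..b} (\<lambda>t. \<psi> t * integral {a..t} (\<lambda>\<tau>. ?k t \<tau> * \<phi> \<tau>))"
    using lborel_pair.integrable_fst[OF F_integrable] by (simp add: inner set_integrable_def)
  moreover have "set_integrable lborel {a..b} (\<lambda>\<tau>. \<phi> \<tau> * integral {\<tau>..b} (\<lambda>t. ?k t \<tau> * \<psi> t))"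
    using lborel_pair.integrable_snd[OF F_integrable] by (simp add: inner' set_integrable_def)
  moreover have "(\<integral>t. (\<integral>\<tau>. F t \<tau> \<partial>lborel) \<partial>lborel) = (\<integral>\<tau>. (\<integral>t. F t \<tau> \<partial>lborel) \<partial>lborel)"
    by (rule lborel_pair.Fubini_integral[symmetric, OF F_integrable])
  ultimately show ?thesis
    by (simp add: inner inner' set_borel_integral_eq_integral(2)[symmetric] set_lebesgue_integral_def
        left_frac_int_def rl_int_def)
qed

(* Functions like caputo a alpha rho x are only meaningful on [a,b], so measurability and
   boundedness are required on S only. *)
definition bdd_borel_on :: "real set \<Rightarrow> (real \<Rightarrow> real) \<Rightarrow> bool" where
  "bdd_borel_on S f \<longleftrightarrow> (\<exists>g \<in> borel_measurable borel. \<forall>t\<in>S. g t = f t) \<and> (\<exists>B. \<forall>t\<in>S. \<bar>f t\<bar> \<le> B)"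

lemma bdd_borel_onE:
  assumes "bdd_borel_on S f"
  obtains g B where "g \<in> borel_measurable borel" "\<And>t. \<bar>g t\<bar> \<le> B" "\<And>t. t \<in> S \<Longrightarrow> g t = f t"
proof -
  obtain g B where g: "g \<in> borel_measurable borel" "\<forall>t\<in>S. g t = f t" and B: "\<forall>t\<in>S. \<bar>f t\<bar> \<le> B"
    using assms unfolding bdd_borel_on_def by blast
  show ?thesis
  proof (rule that[of "\<lambda>t. max (- \<bar>B\<bar>) (min \<bar>B\<bar> (g t))" "\<bar>B\<bar>"])
    show "(\<lambda>t. max (- \<bar>B\<bar>) (min \<bar>B\<bar> (g t))) \<in> borel_measurable borel" using g(1) by measurable
    show "\<bar>max (- \<bar>B\<bar>) (min \<bar>B\<bar> (g t))\<bar> \<le> \<bar>B\<bar>" for t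
      by linarith
    show "max (- \<bar>B\<bar>) (min \<bar>B\<bar> (g t)) = f t" if "t \<in> S" for t
      using B g(2) that by (auto simp: abs_le_iff)
  qed
qed

lemma bdd_borel_on_cong: "bdd_borel_on S f \<Longrightarrow> (\<And>t. t \<in> S \<Longrightarrow> f t = g t) \<Longrightarrow> bdd_borel_on S g"
  unfolding bdd_borel_on_def by auto

lemma bdd_borel_on_mult:
  assumes "bdd_borel_on S f" "bdd_borel_on S g"
  shows "bdd_borel_on S (\<lambda>t. f t * g t)"
proof -
  obtain f1 B1 where f1: "f1 \<in> borel_measurable borel" "\<And>t. \<bar>f1 t\<bar> \<le> B1" "\<And>t. t \<in> S \<Longrightarrow> f1 t = f t"
    using bdd_borel_onE[OF assms(1)] by blast
  obtain g1 B2 where g1: "g1 \<in> borel_measurable borel" "\<And>t. \<bar>g1 t\<bar> \<le> B2" "\<And>t. t \<in> S \<Longrightarrow> g1 t = g t"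
    using bdd_borel_onE[OF assms(2)] by blast
  have "\<bar>f t * g t\<bar> \<le> B1 * B2" if "t \<in> S" for t
    using mult_mono[OF f1(2)[of t] g1(2)[of t]] order_trans[OF abs_ge_zero f1(2)] f1(3)[of t] g1(3)[of t] that
    by (simp add: abs_mult)
  moreover have "(\<lambda>t. f1 t * g1 t) \<in> borel_measurable borel" using f1(1) g1(1) by measurable
  ultimately show ?thesis
    unfolding bdd_borel_on_def using f1(3) g1(3) by (intro conjI exI bexI) auto
qed

lemma bdd_borel_on_cmult: "bdd_borel_on S f \<Longrightarrow> bdd_borel_on S (\<lambda>t. c * f t)"
  by (rule bdd_borel_on_mult[of S "\<lambda>_. c"]) (auto simp: bdd_borel_on_def)

lemma continuous_on_imp_bdd_borel_on:
  assumes "compact S" "continuous_on S f"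
  shows "bdd_borel_on S f"
  unfolding bdd_borel_on_def
proof
  show "\<exists>g\<in>borel_measurable borel. \<forall>t\<in>S. g t = f t"
    using borel_measurable_continuous_on_indicator[OF borel_closed[OF compact_imp_closed[OF assms(1)]] assms(2)]
    by (intro bexI[of _ "\<lambda>t. indicator S t *\<^sub>R f t"]) auto
  show "\<exists>B. \<forall>t\<in>S. \<bar>f t\<bar> \<le> B"
    using compact_imp_bounded[OF compact_continuous_image[OF assms(2,1)]] by (auto simp: bounded_iff)
qed

lemma bdd_borel_on_compose2:
  fixes G :: "real \<Rightarrow> real \<Rightarrow> real \<Rightarrow> real"
  assumes "compact S" and G: "continuous_on (S \<times> UNIV) (\<lambda>(t, u, v). G t u v)"
    and "bdd_borel_on S u" "bdd_borel_on S v"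
  shows "bdd_borel_on S (\<lambda>t. G t (u t) (v t))"
proof -
  obtain u1 B1 where u1: "u1 \<in> borel_measurable borel" "\<And>t. \<bar>u1 t\<bar> \<le> B1" "\<And>t. t \<in> S \<Longrightarrow> u1 t = u t"
    using bdd_borel_onE[OF assms(3)] by blast
  obtain v1 B2 where v1: "v1 \<in> borel_measurable borel" "\<And>t. \<bar>v1 t\<bar> \<le> B2" "\<And>t. t \<in> S \<Longrightarrow> v1 t = v t"
    using bdd_borel_onE[OF assms(4)] by blast
  have "closed (S \<times> (UNIV :: (real \<times> real) set))"
    using \<open>compact S\<close> by (simp add: closed_Times compact_imp_closed)
  then have "(\<lambda>p. indicator (S \<times> UNIV) p *\<^sub>R (\<lambda>(t, u, v). G t u v) p) \<in> borel_measurable borel"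
    (is "?H \<in> _") using G by (intro borel_measurable_continuous_on_indicator borel_closed)
  then have "(\<lambda>t. ?H (t, u1 t, v1 t)) \<in> borel_measurable borel"
    using u1(1) v1(1) by measurable
  moreover have "?H (t, u1 t, v1 t) = G t (u t) (v t)" if "t \<in> S" for t
    using that u1(3) v1(3) by simp
  moreover obtain B where B: "\<forall>p\<in>S \<times> {-B1..B1} \<times> {-B2..B2}. \<bar>(\<lambda>(t, u, v). G t u v) p\<bar> \<le> B"
  proof -
    have "continuous_on (S \<times> {-B1..B1} \<times> {-B2..B2}) (\<lambda>(t, u, v). G t u v)"
      by (rule continuous_on_subset[OF G]) auto
    moreover have "compact (S \<times> {-B1..B1} \<times> {-B2..B2})"
      using \<open>compact S\<close> by (intro compact_Times compact_Icc)
    ultimately have "bounded ((\<lambda>(t, u, v). G t u v) ` (S \<times> {-B1..B1} \<times> {-B2..B2}))"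
      by (intro compact_imp_bounded compact_continuous_image)
    then show ?thesis using that by (auto simp: bounded_iff)
  qed
  have "\<bar>G t (u t) (v t)\<bar> \<le> B" if "t \<in> S" for t
    using B u1(2,3)[of t] v1(2,3)[of t] that by (force simp: abs_le_iff)
  ultimately show ?thesis unfolding bdd_borel_on_def by (intro conjI exI bexI) auto
qed

lemma bdd_borel_on_integrable:
  assumes "bdd_borel_on {a..b} f"
  shows "f integrable_on {a..b}"
proof -
  obtain g B where g: "g \<in> borel_measurable borel" "\<And>t. \<bar>g t\<bar> \<le> B" "\<And>t. t \<in> {a..b} \<Longrightarrow> g t = f t"
    using bdd_borel_onE[OF assms] by blast
  have "set_integrable lborel {a..b} g"
    by (rule set_integrable_bound[OF borel_integrable_atLeastAtMost'[OF continuous_on_const[of _ B]]])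
       (use g(1,2) in \<open>auto simp: set_borel_measurable_def intro!: AE_I2 order_trans[OF _ abs_ge_self]\<close>)
  then have "g integrable_on {a..b}"
    by (rule set_borel_integral_eq_integral(1))
  then show ?thesis
    by (rule integrable_eq) (use g(3) in auto)
qed

lemma bdd_borel_on_parametric_integral:
  fixes F :: "real \<Rightarrow> real \<Rightarrow> real"
  assumes "(\<lambda>(t, \<tau>). F t \<tau>) \<in> borel_measurable (lborel \<Otimes>\<^sub>M lborel)"
    and "\<And>t. t \<in> S \<Longrightarrow> (\<integral>\<tau>. F t \<tau> \<partial>lborel) = f t"
    and "\<And>t. t \<in> S \<Longrightarrow> \<bar>f t\<bar> \<le> C"
  shows "bdd_borel_on S f"
proof -
  have "(\<lambda>t. \<integral>\<tau>. F t \<tau> \<partial>lborel) \<in> borel_measurable lborel"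
    using assms(1) by measurable
  then show ?thesis
    unfolding bdd_borel_on_def using assms(2,3) by (auto intro!: bexI[of _ "\<lambda>t. \<integral>\<tau>. F t \<tau> \<partial>lborel"])
qed

lemma left_frac_int_cong:
  "(\<And>\<tau>. \<tau> \<in> {a..b} \<Longrightarrow> f \<tau> = g \<tau>) \<Longrightarrow> t \<in> {a..b} \<Longrightarrow> left_frac_int a \<alpha> \<rho> f t = left_frac_int a \<alpha> \<rho> g t"
  unfolding left_frac_int_def by (intro integral_cong) auto

lemma rl_int_cong:
  "(\<And>\<tau>. \<tau> \<in> {a..b} \<Longrightarrow> f \<tau> = g \<tau>) \<Longrightarrow> s \<in> {a..b} \<Longrightarrow> rl_int b \<alpha> \<rho> f s = rl_int b \<alpha> \<rho> g s"
  unfolding rl_int_def by (intro integral_cong) auto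

context
  fixes a b \<alpha> \<rho> :: real
  assumes a: "0 < a" and ab: "a \<le> b" and \<alpha>: "0 < \<alpha>" "\<alpha> < 1" and \<rho>: "0 < \<rho>"
begin

lemma left_frac_int_integrable:
  assumes "bdd_borel_on {a..b} \<phi>" "t \<in> {a..b}"
  shows "(\<lambda>\<tau>. (t powr \<rho> - \<tau> powr \<rho>) powr (- \<alpha>) * \<phi> \<tau>) integrable_on {a..t}"
proof -
  obtain g B where g: "g \<in> borel_measurable borel" "\<And>\<tau>. \<bar>g \<tau>\<bar> \<le> B" "\<And>\<tau>. \<tau> \<in> {a..b} \<Longrightarrow> g \<tau> = \<phi> \<tau>"
    using bdd_borel_onE[OF assms(1)] by blast
  obtain C where "set_integrable lborel {a..t} (\<lambda>\<tau>. (t powr \<rho> - \<tau> powr \<rho>) powr (- \<alpha>) * g \<tau>)"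
    using left_kernel_set_integrable[OF a ab \<alpha> \<rho> g(1,2)] assms(2) by metis
  then show ?thesis
    by (rule integrable_eq[OF set_borel_integral_eq_integral(1)]) (use g(3) assms(2) in auto)
qed

lemma bdd_borel_on_left_frac_int:
  assumes "bdd_borel_on {a..b} \<phi>"
  shows "bdd_borel_on {a..b} (left_frac_int a \<alpha> \<rho> \<phi>)"
proof -
  obtain g B where g: "g \<in> borel_measurable borel" "\<And>\<tau>. \<bar>g \<tau>\<bar> \<le> B" "\<And>\<tau>. \<tau> \<in> {a..b} \<Longrightarrow> g \<tau> = \<phi> \<tau>"
    using bdd_borel_onE[OF assms(1)] by blast
  obtain C where C: "\<And>t. t \<in> {a..b} \<Longrightarrow> set_integrable lborel {a..t} (\<lambda>\<tau>. (t powr \<rho> - \<tau> powr \<rho>) powr (- \<alpha>) * g \<tau>)"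
      "\<And>t. t \<in> {a..b} \<Longrightarrow> (LINT \<tau>:{a..t}|lborel. \<bar>(t powr \<rho> - \<tau> powr \<rho>) powr (- \<alpha>) * g \<tau>\<bar>) \<le> C"
    using left_kernel_set_integrable[OF a ab \<alpha> \<rho> g(1,2)] by blast
  have eq: "left_frac_int a \<alpha> \<rho> \<phi> t = (LINT \<tau>:{a..t}|lborel. (t powr \<rho> - \<tau> powr \<rho>) powr (- \<alpha>) * g \<tau>)"
    if "t \<in> {a..b}" for t
    using left_frac_int_cong[OF g(3) that] set_borel_integral_eq_integral(2)[OF C(1)[OF that]]
    by (simp add: left_frac_int_def)
  show ?thesis
  proof (rule bdd_borel_on_parametric_integral)
    show "(\<lambda>(t, \<tau>). if a \<le> \<tau> \<and> \<tau> \<le> t then (t powr \<rho> - \<tau> powr \<rho>) powr (- \<alpha>) * g \<tau> else 0)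
        \<in> borel_measurable (lborel \<Otimes>\<^sub>M lborel)"
      using g(1) by measurable
    show "(\<integral>\<tau>. (if a \<le> \<tau> \<and> \<tau> \<le> t then (t powr \<rho> - \<tau> powr \<rho>) powr (- \<alpha>) * g \<tau> else 0) \<partial>lborel)
        = left_frac_int a \<alpha> \<rho> \<phi> t" if "t \<in> {a..b}" for t
      unfolding eq[OF that] set_lebesgue_integral_def
      by (rule Bochner_Integration.integral_cong) (auto simp: indicator_def)
    show "\<bar>left_frac_int a \<alpha> \<rho> \<phi> t\<bar> \<le> C" if "t \<in> {a..b}" for t
      using eq[OF that] set_integral_norm_bound[OF C(1)[OF that]] C(2)[OF that] by simp
  qed
qed

lemma rl_int_integrable:
  assumes "bdd_borel_on {a..b} \<psi>" "s \<in> {a..b}"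
  shows "(\<lambda>t. (t powr \<rho> - s powr \<rho>) powr (- \<alpha>) * \<psi> t) integrable_on {s..b}"
proof -
  obtain g B where g: "g \<in> borel_measurable borel" "\<And>\<tau>. \<bar>g \<tau>\<bar> \<le> B" "\<And>\<tau>. \<tau> \<in> {a..b} \<Longrightarrow> g \<tau> = \<psi> \<tau>"
    using bdd_borel_onE[OF assms(1)] by blast
  obtain C where "set_integrable lborel {s..b} (\<lambda>t. (t powr \<rho> - s powr \<rho>) powr (- \<alpha>) * g t)"
    using right_kernel_set_integrable[OF a ab \<alpha> \<rho> g(1,2)] assms(2) by metis
  then show ?thesis
    by (rule integrable_eq[OF set_borel_integral_eq_integral(1)]) (use g(3) assms(2) in auto)
qed

lemma left_frac_int_swap:
  assumes "bdd_borel_on {a..b} \<phi>" "bdd_borel_on {a..b} \<psi>"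
  shows "integral {a..b} (\<lambda>t. \<psi> t * left_frac_int a \<alpha> \<rho> \<phi> t) = integral {a..b} (\<lambda>\<tau>. \<phi> \<tau> * rl_int b \<alpha> \<rho> \<psi> \<tau>)"
proof -
  obtain g1 B1 where g1: "g1 \<in> borel_measurable borel" "\<And>\<tau>. \<bar>g1 \<tau>\<bar> \<le> B1" "\<And>\<tau>. \<tau> \<in> {a..b} \<Longrightarrow> g1 \<tau> = \<phi> \<tau>"
    using bdd_borel_onE[OF assms(1)] by blast
  obtain g2 B2 where g2: "g2 \<in> borel_measurable borel" "\<And>\<tau>. \<bar>g2 \<tau>\<bar> \<le> B2" "\<And>\<tau>. \<tau> \<in> {a..b} \<Longrightarrow> g2 \<tau> = \<psi> \<tau>"
    using bdd_borel_onE[OF assms(2)] by blast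
  have "integral {a..b} (\<lambda>t. \<psi> t * left_frac_int a \<alpha> \<rho> \<phi> t) = integral {a..b} (\<lambda>t. g2 t * left_frac_int a \<alpha> \<rho> g1 t)"
    using g1(3) g2(3) left_frac_int_cong[of a b g1 \<phi>] by (intro integral_cong) auto
  also have "\<dots> = integral {a..b} (\<lambda>\<tau>. g1 \<tau> * rl_int b \<alpha> \<rho> g2 \<tau>)"
    by (rule left_frac_int_swap_borel[OF a ab \<alpha> \<rho> g1(1) _ g2(1), where B = "max B1 B2"])
       (use g1(2) g2(2) in \<open>auto intro: max.coboundedI1 max.coboundedI2\<close>)
  also have "\<dots> = integral {a..b} (\<lambda>\<tau>. \<phi> \<tau> * rl_int b \<alpha> \<rho> \<psi> \<tau>)"
    using g1(3) g2(3) rl_int_cong[of a b g2 \<psi>] by (intro integral_cong) auto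
  finally show ?thesis .
qed

end

lemma C1_onE:
  assumes "C1_on a b x"
  obtains x' where "\<And>t. t \<in> {a..b} \<Longrightarrow> (x has_real_derivative x' t) (at t within {a..b})"
    "continuous_on {a..b} x'" "continuous_on {a..b} x"
    "\<And>t. t \<in> {a<..<b} \<Longrightarrow> (x has_real_derivative x' t) (at t)"
proof -
  obtain x' where d: "\<And>t. t \<in> {a..b} \<Longrightarrow> (x has_real_derivative x' t) (at t within {a..b})"
    and c: "continuous_on {a..b} x'"
    using assms unfolding C1_on_def by blast
  have "continuous_on {a..b} x"
    unfolding continuous_on_eq_continuous_within using d DERIV_continuous by blast
  moreover have "(x has_real_derivative x' t) (at t)" if "t \<in> {a<..<b}" for t
    using d[of t] that at_within_interior[of t "{a..b}"] by auto
  ultimately show ?thesis using that d c by blast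
qed

lemma C1_on_diff:
  assumes "C1_on a b x" "C1_on a b y"
  shows "C1_on a b (\<lambda>t. y t - x t)"
proof -
  obtain x' y' where "\<forall>t\<in>{a..b}. (x has_real_derivative x' t) (at t within {a..b})" "continuous_on {a..b} x'"
    "\<forall>t\<in>{a..b}. (y has_real_derivative y' t) (at t within {a..b})" "continuous_on {a..b} y'"
    using assms unfolding C1_on_def by blast
  then show ?thesis
    unfolding C1_on_def by (intro exI[of _ "\<lambda>t. y' t - x' t"] conjI ballI DERIV_diff continuous_on_diff) auto
qed

lemma caputo_eq_left_frac_int:
  assumes "\<And>t. t \<in> {a<..<b} \<Longrightarrow> (x has_real_derivative x' t) (at t)" "t \<in> {a..b}"
  shows "caputo a \<alpha> \<rho> x t = \<rho> powr \<alpha> / Gamma (1 - \<alpha>) * left_frac_int a \<alpha> \<rho> x' t"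
proof -
  have "deriv x \<tau> = x' \<tau>" if "\<tau> \<in> {a..t} - {a, b}" for \<tau>
    using assms that by (intro DERIV_imp_deriv) auto
  then have "integral {a..t} (\<lambda>\<tau>. (t powr \<rho> - \<tau> powr \<rho>) powr (- \<alpha>) * deriv x \<tau>) = left_frac_int a \<alpha> \<rho> x' t"
    unfolding left_frac_int_def by (intro integral_spike[where S="{a,b}"]) auto
  then show ?thesis unfolding caputo_def by simp
qed

lemma integration_by_parts_vanishing:
  fixes h h' F F' :: "real \<Rightarrow> real"
  assumes "a \<le> b"
    and h: "\<And>t. t \<in> {a..b} \<Longrightarrow> (h has_real_derivative h' t) (at t within {a..b})" "continuous_on {a..b} h'"
    and F: "\<And>t. t \<in> {a..b} \<Longrightarrow> (F has_real_derivative F' t) (at t within {a..b})" "continuous_on {a..b} F'"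
    and "h a = 0" "h b = 0"
  shows "integral {a..b} (\<lambda>t. h' t * F t) = - integral {a..b} (\<lambda>t. h t * F' t)"
proof -
  have "continuous_on {a..b} h" "continuous_on {a..b} F"
    unfolding continuous_on_eq_continuous_within using h(1) F(1) DERIV_continuous by blast+
  then have "integral {a..b} (\<lambda>t. h' t * F t + h t * F' t)
      = integral {a..b} (\<lambda>t. h' t * F t) + integral {a..b} (\<lambda>t. h t * F' t)"
    by (intro integral_add integrable_continuous_interval continuous_intros h(2) F(2))
  moreover have "((\<lambda>t. h' t * F t + h t * F' t) has_integral h b * F b - h a * F a) {a..b}"
  proof (rule fundamental_theorem_of_calculus[OF assms(1)])
    fix t assume "t \<in> {a..b}"
    then show "((\<lambda>t. h t * F t) has_vector_derivative h' t * F t + h t * F' t) (at t within {a..b})"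
      using DERIV_mult[OF h(1) F(1)]
      by (simp add: has_real_derivative_iff_has_vector_derivative[symmetric] mult.commute)
  qed
  then have "integral {a..b} (\<lambda>t. h' t * F t + h t * F' t) = 0"
    using assms(6,7) by (simp add: integral_unique)
  ultimately show ?thesis
    by linarith
qed

context
  fixes a b \<alpha> \<rho> :: real
  assumes a: "0 < a" and ab: "a < b" and \<alpha>: "0 < \<alpha>" "\<alpha> < 1" and \<rho>: "0 < \<rho>"
begin

lemma bdd_borel_on_caputo:
  assumes "C1_on a b x"
  shows "bdd_borel_on {a..b} (caputo a \<alpha> \<rho> x)"
proof -
  obtain x' where x': "\<And>t. t \<in> {a..b} \<Longrightarrow> (x has_real_derivative x' t) (at t within {a..b})"
    "continuous_on {a..b} x'" "continuous_on {a..b} x" "\<And>t. t \<in> {a<..<b} \<Longrightarrow> (x has_real_derivative x' t) (at t)"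
    by (rule C1_onE[OF assms]) blast
  have "bdd_borel_on {a..b} x'"
    by (rule continuous_on_imp_bdd_borel_on[OF compact_Icc x'(2)])
  then have "bdd_borel_on {a..b} (\<lambda>t. \<rho> powr \<alpha> / Gamma (1 - \<alpha>) * left_frac_int a \<alpha> \<rho> x' t)"
    using a ab \<alpha> \<rho> by (intro bdd_borel_on_cmult bdd_borel_on_left_frac_int) auto
  then show ?thesis
    by (rule bdd_borel_on_cong) (use caputo_eq_left_frac_int[OF x'(4)] in auto)
qed

lemma bdd_borel_on_lagrangian:
  assumes "continuous_on ({a..b} \<times> UNIV) (\<lambda>(t, u, v). F t u v)" "C1_on a b x"
  shows "bdd_borel_on {a..b} (\<lambda>t. F t (x t) (caputo a \<alpha> \<rho> x t))"
proof (rule bdd_borel_on_compose2[OF compact_Icc assms(1)])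
  show "bdd_borel_on {a..b} x"
    using C1_onE[OF assms(2)] continuous_on_imp_bdd_borel_on[OF compact_Icc] by metis
  show "bdd_borel_on {a..b} (caputo a \<alpha> \<rho> x)"
    by (rule bdd_borel_on_caputo[OF assms(2)])
qed

lemma integral_lagrangian_add_scaled:
  assumes "C1_23 a b L" "C1_23 a b g" "C1_on a b z"
  shows "integral {a..b} (\<lambda>t. L t (z t) (caputo a \<alpha> \<rho> z t) + c * g t (z t) (caputo a \<alpha> \<rho> z t))
    = integral {a..b} (\<lambda>t. L t (z t) (caputo a \<alpha> \<rho> z t)) + c * integral {a..b} (\<lambda>t. g t (z t) (caputo a \<alpha> \<rho> z t))"
proof -
  have "continuous_on ({a..b} \<times> UNIV) (\<lambda>(t, u, v). L t u v)" "continuous_on ({a..b} \<times> UNIV) (\<lambda>(t, u, v). g t u v)"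
    using assms(1,2) unfolding C1_23_def by blast+
  then have "(\<lambda>t. L t (z t) (caputo a \<alpha> \<rho> z t)) integrable_on {a..b}" "(\<lambda>t. g t (z t) (caputo a \<alpha> \<rho> z t)) integrable_on {a..b}"
    using bdd_borel_on_integrable[OF bdd_borel_on_lagrangian[OF _ assms(3)]] by blast+
  then show ?thesis
    by (simp only: integral_add integrable_on_mult_right integral_mult_right)
qed

lemma caputo_diff:
  assumes "C1_on a b x" "C1_on a b y" "t \<in> {a..b}"
  shows "caputo a \<alpha> \<rho> (\<lambda>t. y t - x t) t = caputo a \<alpha> \<rho> y t - caputo a \<alpha> \<rho> x t"
proof -
  obtain x' where x': "\<And>t. t \<in> {a..b} \<Longrightarrow> (x has_real_derivative x' t) (at t within {a..b})"
    "continuous_on {a..b} x'" "continuous_on {a..b} x" "\<And>t. t \<in> {a<..<b} \<Longrightarrow> (x has_real_derivative x' t) (at t)"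
    by (rule C1_onE[OF assms(1)]) blast
  obtain y' where y': "\<And>t. t \<in> {a..b} \<Longrightarrow> (y has_real_derivative y' t) (at t within {a..b})"
    "continuous_on {a..b} y'" "continuous_on {a..b} y" "\<And>t. t \<in> {a<..<b} \<Longrightarrow> (y has_real_derivative y' t) (at t)"
    by (rule C1_onE[OF assms(2)]) blast
  let ?c = "\<rho> powr \<alpha> / Gamma (1 - \<alpha>)"
  have "caputo a \<alpha> \<rho> (\<lambda>t. y t - x t) t = ?c * left_frac_int a \<alpha> \<rho> (\<lambda>\<tau>. y' \<tau> - x' \<tau>) t"
    by (rule caputo_eq_left_frac_int) (use x'(4) y'(4) assms(3) in \<open>auto intro: DERIV_diff\<close>)
  also have "left_frac_int a \<alpha> \<rho> (\<lambda>\<tau>. y' \<tau> - x' \<tau>) t = left_frac_int a \<alpha> \<rho> y' t - left_frac_int a \<alpha> \<rho> x' t"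
  proof -
    have "bdd_borel_on {a..b} x'" "bdd_borel_on {a..b} y'"
      using x'(2) y'(2) by (auto intro: continuous_on_imp_bdd_borel_on)
    note integrable = left_frac_int_integrable[OF a less_imp_le[OF ab] \<alpha> \<rho> _ assms(3)]
    show ?thesis
      unfolding left_frac_int_def right_diff_distrib
      by (rule integral_diff) (intro integrable, fact)+
  qed
  also have "?c * (left_frac_int a \<alpha> \<rho> y' t - left_frac_int a \<alpha> \<rho> x' t) = caputo a \<alpha> \<rho> y t - caputo a \<alpha> \<rho> x t"
    by (simp only: right_diff_distrib caputo_eq_left_frac_int[OF x'(4) assms(3)] caputo_eq_left_frac_int[OF y'(4) assms(3)])
  finally show ?thesis .
qed

lemma rl_right_ok_add_scaled:
  assumes "bdd_borel_on {a..b} f1" "bdd_borel_on {a..b} f2"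
    and ok: "rl_right_ok a b \<alpha> \<rho> f1" "rl_right_ok a b \<alpha> \<rho> f2"
    and f: "\<And>t. t \<in> {a..b} \<Longrightarrow> f t = f1 t + c * f2 t"
  shows "rl_right_ok a b \<alpha> \<rho> f"
proof -
  let ?D = "\<lambda>g t. vector_derivative (rl_int b \<alpha> \<rho> g) (at t within {a..b})"
  have rl_int_eq: "rl_int b \<alpha> \<rho> f s = rl_int b \<alpha> \<rho> f1 s + c * rl_int b \<alpha> \<rho> f2 s" if s: "s \<in> {a..b}" for s
  proof -
    note integrable = rl_int_integrable[OF a less_imp_le[OF ab] \<alpha> \<rho> _ s]
    have "rl_int b \<alpha> \<rho> f s = integral {s..b} (\<lambda>t. (t powr \<rho> - s powr \<rho>) powr (- \<alpha>) * f1 t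
        + c * ((t powr \<rho> - s powr \<rho>) powr (- \<alpha>) * f2 t))"
      unfolding rl_int_def by (rule integral_cong) (use f s in \<open>auto simp: algebra_simps\<close>)
    also have "\<dots> = rl_int b \<alpha> \<rho> f1 s + c * rl_int b \<alpha> \<rho> f2 s"
      unfolding rl_int_def integral_mult_right[symmetric]
      by (intro integral_add integrable_on_mult_right integrable assms(1,2))
    finally show ?thesis .
  qed
  have deriv: "(rl_int b \<alpha> \<rho> f has_vector_derivative ?D f1 t + c * ?D f2 t) (at t within {a..b})"
    if t: "t \<in> {a..b}" for t
  proof (rule has_vector_derivative_transform[OF t rl_int_eq])
    show "((\<lambda>s. rl_int b \<alpha> \<rho> f1 s + c * rl_int b \<alpha> \<rho> f2 s) has_vector_derivative ?D f1 t + c * ?D f2 t) (at t within {a..b})"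
      using ok t unfolding rl_right_ok_def
      by (intro derivative_intros) (auto simp: vector_derivative_works[symmetric])
  qed
  have "rl_right a b \<alpha> \<rho> f t = rl_right a b \<alpha> \<rho> f1 t + c * rl_right a b \<alpha> \<rho> f2 t" if t: "t \<in> {a..b}" for t
    using vector_derivative_within_cbox[OF ab _ deriv[OF t, folded cbox_interval]] t
    by (simp add: rl_right_def cbox_interval algebra_simps)
  moreover have "continuous_on {a..b} (\<lambda>t. rl_right a b \<alpha> \<rho> f1 t + c * rl_right a b \<alpha> \<rho> f2 t)"
    using ok unfolding rl_right_ok_def by (intro continuous_intros) auto
  ultimately have "continuous_on {a..b} (rl_right a b \<alpha> \<rho> f)"
    by (metis (no_types, lifting) continuous_on_eq)
  then show ?thesis
    unfolding rl_right_ok_def using differentiableI_vector[OF deriv] by blast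
qed

lemma caputo_integration_by_parts:
  assumes h: "C1_on a b h" "h a = 0" "h b = 0"
    and f: "bdd_borel_on {a..b} f" "rl_right_ok a b \<alpha> \<rho> f"
  shows "integral {a..b} (\<lambda>t. f t * caputo a \<alpha> \<rho> h t) = - integral {a..b} (\<lambda>t. h t * rl_right a b \<alpha> \<rho> f t)"
proof -
  let ?c = "\<rho> powr \<alpha> / Gamma (1 - \<alpha>)"
  define D where "D t = vector_derivative (rl_int b \<alpha> \<rho> f) (at t within {a..b})" for t
  have "0 < Gamma (1 - \<alpha>)" using \<alpha> by (intro Gamma_real_pos) simp
  then have c: "?c \<noteq> 0" using \<rho> by simp
  obtain h' where h': "\<And>t. t \<in> {a..b} \<Longrightarrow> (h has_real_derivative h' t) (at t within {a..b})"
    "continuous_on {a..b} h'" "continuous_on {a..b} h" "\<And>t. t \<in> {a<..<b} \<Longrightarrow> (h has_real_derivative h' t) (at t)"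
    by (rule C1_onE[OF h(1)]) blast
  have rl_right: "rl_right a b \<alpha> \<rho> f t = ?c * D t" for t
    by (simp add: rl_right_def D_def)
  have D: "(rl_int b \<alpha> \<rho> f has_real_derivative D t) (at t within {a..b})" if "t \<in> {a..b}" for t
  proof -
    have "rl_int b \<alpha> \<rho> f differentiable (at t within {a..b})"
      using f(2) that unfolding rl_right_ok_def by blast
    then show ?thesis
      unfolding D_def has_real_derivative_iff_has_vector_derivative by (rule vector_derivative_works[THEN iffD1])
  qed
  have "continuous_on {a..b} (\<lambda>t. rl_right a b \<alpha> \<rho> f t / ?c)"
    using f(2) c unfolding rl_right_ok_def by (intro continuous_intros) blast+
  then have D_cont: "continuous_on {a..b} D"
    using c by (simp add: rl_right)
  have "integral {a..b} (\<lambda>t. f t * caputo a \<alpha> \<rho> h t) = integral {a..b} (\<lambda>t. ?c * (f t * left_frac_int a \<alpha> \<rho> h' t))"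
  proof (rule integral_cong)
    fix t assume "t \<in> {a..b}"
    then show "f t * caputo a \<alpha> \<rho> h t = ?c * (f t * left_frac_int a \<alpha> \<rho> h' t)"
      using caputo_eq_left_frac_int[OF h'(4)] by simp
  qed
  also have "\<dots> = ?c * integral {a..b} (\<lambda>\<tau>. h' \<tau> * rl_int b \<alpha> \<rho> f \<tau>)"
    using left_frac_int_swap[OF a less_imp_le[OF ab] \<alpha> \<rho> continuous_on_imp_bdd_borel_on[OF compact_Icc h'(2)] f(1)]
    by simp
  also have "\<dots> = - (?c * integral {a..b} (\<lambda>t. h t * D t))"
    using integration_by_parts_vanishing[OF less_imp_le[OF ab] h'(1,2) D D_cont h(2,3)] by simp
  also have "\<dots> = - integral {a..b} (\<lambda>t. ?c * (h t * D t))"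
    unfolding integral_mult_right ..
  also have "(\<lambda>t. ?c * (h t * D t)) = (\<lambda>t. h t * rl_right a b \<alpha> \<rho> f t)"
    unfolding rl_right by (simp add: fun_eq_iff)
  finally show ?thesis .
qed

theorem convex_lagrangian_minimizer:
  fixes F :: "real \<Rightarrow> real \<Rightarrow> real \<Rightarrow> real"
  assumes F: "C1_23 a b F" "convex_S a b F"
    and x: "C1_on a b x" "rl_right_ok a b \<alpha> \<rho> (\<lambda>t. pd3 F t (x t) (caputo a \<alpha> \<rho> x t))"
    and EL: "\<forall>t\<in>{a..b}. pd2 F t (x t) (caputo a \<alpha> \<rho> x t)
               - rl_right a b \<alpha> \<rho> (\<lambda>s. pd3 F s (x s) (caputo a \<alpha> \<rho> x s)) t = 0"
    and y: "C1_on a b y" "y a = x a" "y b = x b"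
  shows "integral {a..b} (\<lambda>t. F t (x t) (caputo a \<alpha> \<rho> x t)) \<le> integral {a..b} (\<lambda>t. F t (y t) (caputo a \<alpha> \<rho> y t))"
proof -
  define h where "h t = y t - x t" for t
  let ?Fx = "\<lambda>t. F t (x t) (caputo a \<alpha> \<rho> x t)" and ?Fy = "\<lambda>t. F t (y t) (caputo a \<alpha> \<rho> y t)"
  let ?P = "\<lambda>t. pd2 F t (x t) (caputo a \<alpha> \<rho> x t)" and ?Q = "\<lambda>t. pd3 F t (x t) (caputo a \<alpha> \<rho> x t)"
  let ?Dh = "caputo a \<alpha> \<rho> h"
  have h: "C1_on a b h" "h a = 0" "h b = 0"
    unfolding h_def using C1_on_diff[OF x(1) y(1)] y(2,3) by auto
  have Dh: "?Dh t = caputo a \<alpha> \<rho> y t - caputo a \<alpha> \<rho> x t" if "t \<in> {a..b}" for t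
    unfolding h_def by (rule caputo_diff[OF x(1) y(1) that])
  have cont: "continuous_on ({a..b} \<times> UNIV) (\<lambda>(t, u, v). F t u v)"
      "continuous_on ({a..b} \<times> UNIV) (\<lambda>(t, u, v). pd2 F t u v)"
      "continuous_on ({a..b} \<times> UNIV) (\<lambda>(t, u, v). pd3 F t u v)"
    using F(1) unfolding C1_23_def by blast+
  have bdd: "bdd_borel_on {a..b} ?Fx" "bdd_borel_on {a..b} ?Fy"
      "bdd_borel_on {a..b} ?P" "bdd_borel_on {a..b} ?Q"
    using bdd_borel_on_lagrangian[OF cont(1)] bdd_borel_on_lagrangian[OF cont(2)]
      bdd_borel_on_lagrangian[OF cont(3)] x(1) y(1) by auto
  have h_cont: "continuous_on {a..b} h"
    using C1_onE[OF h(1)] by blast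
  have bdd_h: "bdd_borel_on {a..b} h" "bdd_borel_on {a..b} ?Dh"
    by (rule continuous_on_imp_bdd_borel_on[OF compact_Icc h_cont], rule bdd_borel_on_caputo[OF h(1)])
  have "continuous_on {a..b} (rl_right a b \<alpha> \<rho> ?Q)"
    using x(2) unfolding rl_right_ok_def by blast
  with h_cont have cont_h: "continuous_on {a..b} (\<lambda>t. h t * rl_right a b \<alpha> \<rho> ?Q t)"
    by (rule continuous_on_mult)
  have "?P t * h t + ?Q t * ?Dh t \<le> ?Fy t - ?Fx t" if t: "t \<in> {a..b}" for t
  proof -
    have "?P t * h t + ?Q t * ?Dh t
        \<le> F t (x t + h t) (caputo a \<alpha> \<rho> x t + ?Dh t) - ?Fx t"
      using F(2) t unfolding convex_S_def by blast
    moreover have "x t + h t = y t" "caputo a \<alpha> \<rho> x t + ?Dh t = caputo a \<alpha> \<rho> y t"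
      using Dh[OF t] by (simp_all add: h_def)
    ultimately show ?thesis by simp
  qed
  moreover have int: "(\<lambda>t. ?P t * h t) integrable_on {a..b}" "(\<lambda>t. ?Q t * ?Dh t) integrable_on {a..b}"
      "?Fx integrable_on {a..b}" "?Fy integrable_on {a..b}"
      "(\<lambda>t. h t * rl_right a b \<alpha> \<rho> ?Q t) integrable_on {a..b}"
    using bdd bdd_h integrable_continuous_interval[OF cont_h]
    by (auto intro: bdd_borel_on_integrable bdd_borel_on_mult)
  ultimately have "integral {a..b} (\<lambda>t. ?P t * h t + ?Q t * ?Dh t) \<le> integral {a..b} (\<lambda>t. ?Fy t - ?Fx t)"
    by (intro integral_le integrable_add integrable_diff) auto
  also have "\<dots> = integral {a..b} ?Fy - integral {a..b} ?Fx"
    by (rule integral_diff[OF int(4,3)])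
  finally have variation: "integral {a..b} (\<lambda>t. ?P t * h t + ?Q t * ?Dh t) \<le> integral {a..b} ?Fy - integral {a..b} ?Fx" .
  have "integral {a..b} (\<lambda>t. ?P t * h t + ?Q t * ?Dh t)
      = integral {a..b} (\<lambda>t. ?P t * h t) - integral {a..b} (\<lambda>t. h t * rl_right a b \<alpha> \<rho> ?Q t)"
    unfolding integral_add[OF int(1,2)] caputo_integration_by_parts[OF h bdd(4) x(2)] by simp
  also have "\<dots> = integral {a..b} (\<lambda>t. ?P t * h t - h t * rl_right a b \<alpha> \<rho> ?Q t)"
    by (rule integral_diff[OF int(1,5), symmetric])
  also have "\<dots> = integral {a..b} (\<lambda>t. 0)"
  proof (rule integral_cong)
    fix t assume "t \<in> {a..b}"
    then have "rl_right a b \<alpha> \<rho> ?Q t = ?P t" using EL by simp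
    then show "?P t * h t - h t * rl_right a b \<alpha> \<rho> ?Q t = 0" by (simp add: mult.commute)
  qed
  finally show ?thesis using variation by simp
qed

end

lemma
  assumes "C1_23 a b L" "C1_23 a b g" "t \<in> {a..b}"
  shows pd2_add_scaled: "pd2 (\<lambda>s u v. L s u v + c * g s u v) t u v = pd2 L t u v + c * pd2 g t u v"
    and pd3_add_scaled: "pd3 (\<lambda>s u v. L s u v + c * g s u v) t u v = pd3 L t u v + c * pd3 g t u v"
  using assms unfolding C1_23_def pd2_def[of "\<lambda>s u v. L s u v + c * g s u v"] pd3_def[of "\<lambda>s u v. L s u v + c * g s u v"]
  by (auto intro!: DERIV_imp_deriv DERIV_add DERIV_cmult)

lemma C1_23_add_scaled:
  assumes "C1_23 a b L" "C1_23 a b g"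
  shows "C1_23 a b (\<lambda>s u v. L s u v + c * g s u v)"
proof -
  let ?K = "\<lambda>s u v. L s u v + c * g s u v"
  have K2: "continuous_on ({a..b} \<times> UNIV) (\<lambda>(t, u, v). pd2 L t u v + c * pd2 g t u v)"
      and K3: "continuous_on ({a..b} \<times> UNIV) (\<lambda>(t, u, v). pd3 L t u v + c * pd3 g t u v)"
      and K: "continuous_on ({a..b} \<times> UNIV) (\<lambda>(t, u, v). ?K t u v)"
    using assms unfolding C1_23_def by (auto intro!: continuous_intros simp: split_def)
  have "continuous_on ({a..b} \<times> UNIV) (\<lambda>(t, u, v). pd2 ?K t u v)"
    by (rule continuous_on_eq[OF K2]) (auto simp: pd2_add_scaled[OF assms])
  moreover have "continuous_on ({a..b} \<times> UNIV) (\<lambda>(t, u, v). pd3 ?K t u v)"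
    by (rule continuous_on_eq[OF K3]) (auto simp: pd3_add_scaled[OF assms])
  moreover have "((\<lambda>w. ?K t w v) has_real_derivative pd2 ?K t u v) (at u)"
      "((\<lambda>w. ?K t u w) has_real_derivative pd3 ?K t u v) (at v)" if "t \<in> {a..b}" for t u v
    using assms that unfolding pd2_add_scaled[OF assms that] pd3_add_scaled[OF assms that] C1_23_def
    by (auto intro!: DERIV_add DERIV_cmult)
  ultimately show ?thesis
    using K unfolding C1_23_def by blast
qed

lemma convex_S_add_scaled:
  assumes "C1_23 a b L" "C1_23 a b g" "convex_S a b L" "convex_S a b g" "0 \<le> c"
  shows "convex_S a b (\<lambda>s u v. L s u v + c * g s u v)"
  unfolding convex_S_def
proof (intro ballI allI)
  fix t u v u1 v1 assume t: "t \<in> {a..b}"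
  have "pd2 L t u v * u1 + pd3 L t u v * v1 \<le> L t (u + u1) (v + v1) - L t u v"
    "pd2 g t u v * u1 + pd3 g t u v * v1 \<le> g t (u + u1) (v + v1) - g t u v"
    using assms(3,4) t unfolding convex_S_def by blast+
  then have "c * (pd2 g t u v * u1 + pd3 g t u v * v1) \<le> c * (g t (u + u1) (v + v1) - g t u v)"
    using assms(5) by (intro mult_left_mono) auto
  then show "pd2 (\<lambda>s u v. L s u v + c * g s u v) t u v * u1 + pd3 (\<lambda>s u v. L s u v + c * g s u v) t u v * v1
      \<le> L t (u + u1) (v + v1) + c * g t (u + u1) (v + v1) - (L t u v + c * g t u v)"
    using \<open>pd2 L t u v * u1 + pd3 L t u v * v1 \<le> _\<close>
    by (simp add: pd2_add_scaled[OF assms(1,2) t] pd3_add_scaled[OF assms(1,2) t] algebra_simps)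
qed

theorem mainTheorem9:
  fixes a b \<alpha> \<rho> xa xb l lam :: real
    and L g :: "real \<Rightarrow> real \<Rightarrow> real \<Rightarrow> real"
    and x :: "real \<Rightarrow> real"
  assumes "0 < a" and "a < b" and "0 < \<alpha>" and "\<alpha> < 1" and "0 < \<rho>"
    and "C1_23 a b L" and "C1_23 a b g"
    and "\<forall>y. C1_on a b y \<longrightarrow>
           rl_right_ok a b \<alpha> \<rho> (\<lambda>t. pd3 L t (y t) (caputo a \<alpha> \<rho> y t))"
    and "\<forall>y. C1_on a b y \<longrightarrow>
           rl_right_ok a b \<alpha> \<rho> (\<lambda>t. pd3 g t (y t) (caputo a \<alpha> \<rho> y t))"
    and "convex_S a b L" and "convex_S a b g"
    and "lam \<ge> 0"
    and "C1_on a b x" and "x a = xa" and "x b = xb"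
    and "integral {a..b} (\<lambda>t. g t (x t) (caputo a \<alpha> \<rho> x t)) = l"
    and "\<forall>t\<in>{a..b}.
           pd2 (\<lambda>s u v. L s u v + lam * g s u v) t (x t) (caputo a \<alpha> \<rho> x t)
           - rl_right a b \<alpha> \<rho>
               (\<lambda>s. pd3 (\<lambda>s u v. L s u v + lam * g s u v) s (x s) (caputo a \<alpha> \<rho> x s)) t = 0"
  shows "\<forall>y. C1_on a b y \<and> y a = xa \<and> y b = xb
             \<and> integral {a..b} (\<lambda>t. g t (y t) (caputo a \<alpha> \<rho> y t)) = l
           \<longrightarrow> integral {a..b} (\<lambda>t. L t (x t) (caputo a \<alpha> \<rho> x t))
               \<le> integral {a..b} (\<lambda>t. L t (y t) (caputo a \<alpha> \<rho> y t))"
proof (intro allI impI)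
  note ctx = assms(1-5)
  fix y assume y: "C1_on a b y \<and> y a = xa \<and> y b = xb \<and> integral {a..b} (\<lambda>t. g t (y t) (caputo a \<alpha> \<rho> y t)) = l"
  let ?K = "\<lambda>s u v. L s u v + lam * g s u v"
  have "continuous_on ({a..b} \<times> UNIV) (\<lambda>(t, u, v). pd3 L t u v)" "continuous_on ({a..b} \<times> UNIV) (\<lambda>(t, u, v). pd3 g t u v)"
    using assms(6,7) unfolding C1_23_def by blast+
  then have "bdd_borel_on {a..b} (\<lambda>t. pd3 L t (x t) (caputo a \<alpha> \<rho> x t))" "bdd_borel_on {a..b} (\<lambda>t. pd3 g t (x t) (caputo a \<alpha> \<rho> x t))"
    using bdd_borel_on_lagrangian[OF ctx _ assms(13)] by blast+
  then have "rl_right_ok a b \<alpha> \<rho> (\<lambda>t. pd3 ?K t (x t) (caputo a \<alpha> \<rho> x t))"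
    by (rule rl_right_ok_add_scaled[OF ctx]) (use assms(8,9,13) pd3_add_scaled[OF assms(6,7)] in auto)
  then have "integral {a..b} (\<lambda>t. ?K t (x t) (caputo a \<alpha> \<rho> x t)) \<le> integral {a..b} (\<lambda>t. ?K t (y t) (caputo a \<alpha> \<rho> y t))"
    using convex_lagrangian_minimizer[OF ctx C1_23_add_scaled[OF assms(6,7)] convex_S_add_scaled[OF assms(6,7,10,11,12)]
        assms(13) _ assms(17)] y assms(14,15)
    by simp
  then show "integral {a..b} (\<lambda>t. L t (x t) (caputo a \<alpha> \<rho> x t)) \<le> integral {a..b} (\<lambda>t. L t (y t) (caputo a \<alpha> \<rho> y t))"
    using integral_lagrangian_add_scaled[OF ctx assms(6,7)] assms(13,16) y by simp
qed

end
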